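(* Let $p$ be an odd prime and let $H\le\mathrm{S}_n$, $n=pk$, have orbits $\Omega_1,\dots,\Omega_k$ each of size $p$ such that each $D_i:=H|_{\Omega_i}$ is permutation isomorphic to the dihedral group $\mathrm{D}_{2p}$ of order $2p$ in its natural action of degree $p$. Let $D=D_1\times\dots\times D_k\le\mathrm{S}_n$, let $G_i$ be the Sylow $p$-subgroup of $D_i$, $G=G_1\times\dots\times G_k\le\mathrm{S}_n$, and for $q\in\{2,p\}$ let $H_q$ be a Sylow $q$-subgroup of $H$. Then: (1) $H=H_p\rtimes H_2=(H\cap G)\rtimes H_2$, and so $N_{\mathrm{S}_n}(H)\le N_{\mathrm{S}_n}(H_p)$; (2) $H_p$ is a subdirect product of $G$ (each projection $H_p\to G_i$ is surjective), and so $H_p$ has orbits $\Omega_1,\dots,\Omega_k$ with each $H_p|_{\Omega_i}$ cyclic of order $p$; (3) for every $i$ there exists $\alpha_i\in\Omega_i$ such that $H_2|_{\Omega_i}=(D_i)_{\alpha_i}$.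
   Context: Subgroups of $\mathrm{Sym}(\Omega_i)$ are regarded as subgroups of $\mathrm{S}_n$ supported on $\Omega_i$. $(D_i)_{\alpha_i}$ is the stabiliser of $\alpha_i$ in $D_i$. *)

theory Defs
  imports "HOL-Algebra.Sym_Groups" "HOL-Algebra.Group_Action" "HOL-Algebra.Elementary_Groups"
          "HOL-Computational_Algebra.Primes"
begin

definition restr_perm :: "nat set \<Rightarrow> (nat \<Rightarrow> nat) \<Rightarrow> (nat \<Rightarrow> nat)" where
  "restr_perm \<Omega> \<sigma> = (\<lambda>x. if x \<in> \<Omega> then \<sigma> x else x)"

definition restr_group :: "nat set \<Rightarrow> (nat \<Rightarrow> nat) set \<Rightarrow> (nat \<Rightarrow> nat) set" where
  "restr_group \<Omega> H = restr_perm \<Omega> ` H"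

text \<open>The dihedral group D_2p in its natural action of degree p, on {0..<p}:
  the maps x \<mapsto> a x + b (mod p) with a = 1 or a = -1.\<close>
definition dihedral_perms :: "nat \<Rightarrow> (nat \<Rightarrow> nat) set" where
  "dihedral_perms p =
     {(\<lambda>x. if x < p then (a * x + b) mod p else x) | a b. a \<in> {1, p - 1} \<and> b < p}"

definition transport_perm :: "(nat \<Rightarrow> nat) \<Rightarrow> nat set \<Rightarrow> (nat \<Rightarrow> nat) \<Rightarrow> (nat \<Rightarrow> nat)" where
  "transport_perm f \<Omega> \<sigma> = (\<lambda>y. if y \<in> f ` \<Omega> then f (\<sigma> (inv_into \<Omega> f y)) else y)"

definition perm_isomorphic :: "(nat \<Rightarrow> nat) set \<Rightarrow> nat set \<Rightarrow> (nat \<Rightarrow> nat) set \<Rightarrow> nat set \<Rightarrow> bool" where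
  "perm_isomorphic A \<Omega> B X \<longleftrightarrow> (\<exists>f. bij_betw f \<Omega> X \<and> transport_perm f \<Omega> ` A = B)"

definition is_sylow :: "('a, 'b) monoid_scheme \<Rightarrow> nat \<Rightarrow> 'a set \<Rightarrow> bool" where
  "is_sylow G q P \<longleftrightarrow> subgroup P G \<and> card P = q ^ multiplicity q (order G)"

definition direct_prod_perms :: "nat \<Rightarrow> nat \<Rightarrow> (nat \<Rightarrow> nat set) \<Rightarrow> (nat \<Rightarrow> (nat \<Rightarrow> nat) set) \<Rightarrow> (nat \<Rightarrow> nat) set" where
  "direct_prod_perms n k \<Omega> K =
     {\<sigma> \<in> carrier (sym_group n). \<forall>i \<in> {1..k}. restr_perm (\<Omega> i) \<sigma> \<in> K i}"

end

theory Submission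
  imports Defs "HOL-Algebra.Multiplicative_Group" "HOL-Algebra.Sylow"
begin

text \<open>
  Inside the block D_i = H|Omega_i, isomorphic to the dihedral group of degree p, every element
  outside the rotation group G_i is a reflection: an involution with exactly one fixed point.
  Since an involution is its own odd power, an element of H of odd order restricts into every
  G_i, and an element restricting into every G_i has order dividing p. So H_p and H \<inter> G are
  both the set of elements of H whose p-th power is trivial; in particular every element of H
  has order dividing 2p, so |H| = 2^a p^b. A subset of H defined by a power condition is
  normal in H and invariant under the normaliser of H; coprimality gives H_p \<inter> H_2 = 1, and
  then |H_p| |H_2| = |H| gives H = H_p H_2. Restricting to Omega_i, D_i = (H_p|Omega_i)(H_2|Omega_i)
  with H_p|Omega_i \<le> G_i and H_2|Omega_i \<inter> G_i = 1, so counting in D_i of order 2p forces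
  H_p|Omega_i = G_i and |H_2|Omega_i| = 2. The nontrivial element of H_2|Omega_i is a reflection,
  and its unique fixed point alpha_i has stabiliser {1, reflection} = H_2|Omega_i in D_i.
\<close>

section \<open>Finite groups\<close>

lemma (in group) pow_eq_one_coprime:
  assumes "x \<in> carrier G" "x [^] (a::nat) = \<one>" "x [^] (b::nat) = \<one>" "coprime a b"
  shows "x = \<one>"
proof -
  have "ord x dvd a" "ord x dvd b" using assms pow_eq_id by auto
  then have "ord x = 1" using assms(4) coprime_common_divisor_nat by blast
  then show ?thesis using ord_eq_1 assms(1) by blast
qed

lemma (in group) involution_pow_odd:
  assumes "x \<in> carrier G" "x \<otimes> x = \<one>" "odd m"
  shows "x [^] (m::nat) = x"
proof -
  obtain j where m: "m = Suc (2 * j)" using assms(3) oddE by fastforce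
  have "x [^] (2::nat) = \<one>" using assms by (simp add: numeral_2_eq_2)
  then show ?thesis unfolding m using assms(1) by (simp add: nat_pow_pow[symmetric])
qed

lemma (in group) pow_card_subgroup:
  assumes "subgroup X G" "x \<in> X"
  shows "x [^] card X = \<one>"
proof -
  interpret X: group "G\<lparr>carrier := X\<rparr>" using subgroup_imp_group[OF assms(1)] .
  have "x [^]\<^bsub>G\<lparr>carrier := X\<rparr>\<^esub> order (G\<lparr>carrier := X\<rparr>) = \<one>"
    using X.pow_order_eq_1 assms(2) by simp
  then show ?thesis by (simp add: order_def nat_pow_consistent[symmetric])
qed

lemma (in group) prime_dvd_exponent:
  assumes fin: "finite (carrier G)" and exp: "\<And>x. x \<in> carrier G \<Longrightarrow> x [^] (e::nat) = \<one>"
    and q: "prime q" "q dvd order G"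
  shows "q dvd e"
proof -
  define a where "a = multiplicity q (order G)"
  obtain m where "order G = q ^ a * m" unfolding a_def by (metis multiplicity_dvd dvdE)
  then obtain P where P: "subgroup P G" "card P = q ^ a"
    using sylow_thm[OF q(1) is_group _ fin] by blast
  have "a \<noteq> 0"
    using q fin order_gt_0_iff_finite unfolding a_def
    by (simp add: prime_multiplicity_gt_zero_iff prime_imp_prime_elem)
  then have "card P \<noteq> 1" using P(2) prime_gt_1_nat[OF q(1)] by simp
  then have "P \<noteq> {\<one>}" by auto
  then obtain x where x: "x \<in> P" "x \<noteq> \<one>" using subgroup.one_closed[OF P(1)] by blast
  have xG: "x \<in> carrier G" using subgroup.mem_carrier[OF P(1) x(1)] .
  have "ord x dvd q ^ a" using pow_card_subgroup[OF P(1) x(1)] P(2) pow_eq_id[OF xG] by simp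
  then obtain i where "ord x = q ^ i" using divides_primepow_nat[OF q(1)] by blast
  moreover have "ord x \<noteq> 1" using ord_eq_1[OF xG] x(2) by simp
  ultimately have "q dvd ord x" by (cases i) auto
  also have "ord x dvd e" using pow_eq_id[OF xG] exp[OF xG] by simp
  finally show ?thesis .
qed

lemma (in group) prime_order_imp_cyclic:
  assumes "prime (order G)"
  shows "cyclic_group G"
proof -
  have "carrier G \<noteq> {\<one>}" using assms unfolding order_def by auto
  then obtain g where g: "g \<in> carrier G" "g \<noteq> \<one>" by blast
  have "ord g dvd order G" "ord g \<noteq> 1" using ord_dvd_group_order ord_eq_1 g by auto
  then have "ord g = order G" using assms by (meson prime_nat_iff)
  then have card: "card (generate G {g}) = card (carrier G)"
    using generate_pow_card[OF g(1)] unfolding order_def by linarith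
  have fin: "finite (carrier G)" using order_gt_0_iff_finite prime_gt_0_nat[OF assms] by simp
  have "generate G {g} \<subseteq> carrier G" using generate_incl g(1) by simp
  then have "generate G {g} = carrier G" using card_subset_eq[OF fin _ card] by blast
  then have "subgroup_generated G {g} = G"
    using g(1) unfolding subgroup_generated_def by simp
  then show ?thesis unfolding cyclic_group_def using g(1) by blast
qed

lemma card_set_mult_le:
  assumes "finite A" "finite B"
  shows "card (A <#>\<^bsub>G\<^esub> B) \<le> card A * card B"
proof -
  have eq: "A <#>\<^bsub>G\<^esub> B = (\<lambda>(a, b). a \<otimes>\<^bsub>G\<^esub> b) ` (A \<times> B)"
    unfolding set_mult_def by auto
  have "card (A <#>\<^bsub>G\<^esub> B) \<le> card (A \<times> B)"
    unfolding eq by (rule card_image_le) (simp add: assms)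
  then show ?thesis by (simp add: card_cartesian_product)
qed

lemma (in group) card_set_mult_eq:
  assumes "subgroup A G" "subgroup B G" "A \<inter> B = {\<one>}"
  shows "card (A <#> B) = card A * card B"
proof -
  have "a = a' \<and> b = b'"
    if ab: "a \<in> A" "b \<in> B" "a' \<in> A" "b' \<in> B" and eq: "a \<otimes> b = a' \<otimes> b'" for a b a' b'
  proof -
    have [simp]: "a \<in> carrier G" "b \<in> carrier G" "a' \<in> carrier G" "b' \<in> carrier G"
      using ab assms(1,2) subgroup.subset by blast+
    have "inv a' \<otimes> a = inv a' \<otimes> (a \<otimes> b) \<otimes> inv b" by (simp add: m_assoc)
    also have "\<dots> = b' \<otimes> inv b" unfolding eq by (simp add: m_assoc[symmetric])
    finally have "inv a' \<otimes> a = b' \<otimes> inv b" .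
    moreover have "inv a' \<otimes> a \<in> A" "b' \<otimes> inv b \<in> B"
      using ab assms(1,2) by (simp_all add: subgroup.m_closed subgroup.m_inv_closed)
    ultimately have "inv a' \<otimes> a = \<one>" using assms(3) by auto
    then have "a = a'" using inv_solve_left'[of \<one> a' a] by simp
    then show ?thesis using eq by simp
  qed
  then have "inj_on (\<lambda>(a, b). a \<otimes> b) (A \<times> B)" by (intro inj_onI) auto
  moreover have "A <#> B = (\<lambda>(a, b). a \<otimes> b) ` (A \<times> B)" unfolding set_mult_def by auto
  ultimately show ?thesis by (simp add: card_image card_cartesian_product)
qed

lemma (in group) conj_pow:
  assumes "g \<in> carrier G" "h \<in> carrier G"
  shows "(g \<otimes> h \<otimes> inv g) [^] (m::nat) = g \<otimes> h [^] m \<otimes> inv g"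
proof (induction m)
  case 0
  show ?case using assms by simp
next
  case (Suc m)
  have cancel: "inv g \<otimes> (g \<otimes> y) = y" if "y \<in> carrier G" for y
    using that assms(1) by (simp add: m_assoc[symmetric])
  have "(g \<otimes> h \<otimes> inv g) [^] Suc m = (g \<otimes> h [^] m \<otimes> inv g) \<otimes> (g \<otimes> h \<otimes> inv g)"
    using Suc by simp
  also have "\<dots> = g \<otimes> (h [^] m \<otimes> h) \<otimes> inv g"
    using assms by (simp add: m_assoc cancel)
  also have "\<dots> = g \<otimes> h [^] Suc m \<otimes> inv g" by (simp only: nat_pow_Suc)
  finally show ?case .
qed

lemma (in group) normalizer_conj_mem:
  assumes "H \<subseteq> carrier G" "g \<in> normalizer G H" "h \<in> H"
  shows "g \<otimes> h \<otimes> inv g \<in> H"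
proof -
  have "g <# H #> inv g = H" using assms(1,2) unfolding normalizer_def stabilizer_def by simp
  moreover have "g \<otimes> h \<otimes> inv g \<in> g <# H #> inv g"
    using assms(3) unfolding l_coset_def r_coset_def by blast
  ultimately show ?thesis by simp
qed

lemma (in group) normalizerI_finite:
  assumes "finite P" "P \<subseteq> carrier G" "g \<in> carrier G" and conj: "\<And>h. h \<in> P \<Longrightarrow> g \<otimes> h \<otimes> inv g \<in> P"
  shows "g \<in> normalizer G P"
proof -
  have "inj_on (\<lambda>h. g \<otimes> h \<otimes> inv g) P"
    by (rule inj_onI) (meson assms(2,3) conjugation_is_inj subsetD)
  moreover have "(\<lambda>h. g \<otimes> h \<otimes> inv g) ` P \<subseteq> P" using conj by blast
  ultimately have "(\<lambda>h. g \<otimes> h \<otimes> inv g) ` P = P" using endo_inj_surj[OF assms(1)] by simp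
  moreover have "g <# P #> inv g = (\<lambda>h. g \<otimes> h \<otimes> inv g) ` P"
    unfolding l_coset_def r_coset_def by auto
  ultimately show ?thesis using assms(2,3) unfolding normalizer_def stabilizer_def by simp
qed

lemma (in group) conj_torsion:
  assumes "g \<in> carrier G" "h \<in> carrier G" "h [^] (e::nat) = \<one>"
  shows "(g \<otimes> h \<otimes> inv g) [^] e = \<one>"
  using assms by (simp add: conj_pow)

lemma (in group) torsion_set_normal:
  assumes "subgroup H G" "subgroup P G" and P: "P = {h \<in> H. h [^] (e::nat) = \<one>}"
  shows "P \<lhd> G\<lparr>carrier := H\<rparr>"
proof -
  interpret GH: group "G\<lparr>carrier := H\<rparr>" using subgroup_imp_group[OF assms(1)] .
  show ?thesis
  proof (rule GH.normal_invI)
    show "subgroup P (G\<lparr>carrier := H\<rparr>)"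
      using subgroup_incl[OF assms(2,1)] P by blast
  next
    fix x h assume x: "x \<in> carrier (G\<lparr>carrier := H\<rparr>)" and h: "h \<in> P"
    have xG: "x \<in> carrier G" and hG: "h \<in> carrier G"
      using x h P subgroup.subset[OF assms(1)] by auto
    have "x \<otimes> h \<otimes> inv x \<in> H"
      using x h P assms(1) by (simp add: subgroup.m_closed subgroup.m_inv_closed)
    moreover have "(x \<otimes> h \<otimes> inv x) [^] e = \<one>" using conj_torsion xG hG h P by simp
    ultimately show "x \<otimes>\<^bsub>G\<lparr>carrier := H\<rparr>\<^esub> h \<otimes>\<^bsub>G\<lparr>carrier := H\<rparr>\<^esub> inv\<^bsub>G\<lparr>carrier := H\<rparr>\<^esub> x \<in> P"
      using P x m_inv_consistent[OF assms(1)] by simp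
  qed
qed

lemma (in group) normalizer_subset_torsion_set_normalizer:
  assumes "finite H" "H \<subseteq> carrier G" and P: "P = {h \<in> H. h [^] (e::nat) = \<one>}"
  shows "normalizer G H \<subseteq> normalizer G P"
proof
  fix g assume g: "g \<in> normalizer G H"
  then have gG: "g \<in> carrier G" unfolding normalizer_def stabilizer_def by simp
  show "g \<in> normalizer G P"
  proof (rule normalizerI_finite)
    show "finite P" "P \<subseteq> carrier G" using assms by auto
    fix h assume "h \<in> P"
    then have "h \<in> H" "h \<in> carrier G" "h [^] e = \<one>" using P assms(2) by auto
    then show "g \<otimes> h \<otimes> inv g \<in> P"
      using normalizer_conj_mem[OF assms(2) g] conj_torsion[OF gG] P by simp
  qed (rule gG)
qed

lemma eq_prime_power_product:
  fixes m p q :: nat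
  assumes "m > 0" "prime p" "prime q" "p \<noteq> q"
    and divisors: "\<And>r. prime r \<Longrightarrow> r dvd m \<Longrightarrow> r = p \<or> r = q"
  shows "m = p ^ multiplicity p m * q ^ multiplicity q m"
proof -
  have sub: "prime_factors m \<subseteq> {p, q}"
    using divisors by (auto simp: in_prime_factors_iff)
  have "m = (\<Prod>r \<in> prime_factors m. r ^ multiplicity r m)"
    using prime_factorization_nat[OF assms(1)] .
  also have "\<dots> = (\<Prod>r \<in> {p, q}. r ^ multiplicity r m)"
  proof (rule prod.mono_neutral_left[OF _ sub])
    show "\<forall>r\<in>{p, q} - prime_factors m. r ^ multiplicity r m = 1"
      using assms(1-3) by (auto simp: in_prime_factors_iff not_dvd_imp_multiplicity_0)
  qed simp
  also have "\<dots> = p ^ multiplicity p m * q ^ multiplicity q m" using assms(4) by simp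
  finally show ?thesis .
qed

section \<open>Restricting and relabelling permutations\<close>

lemma restr_perm_id [simp]: "restr_perm \<Omega> id = id"
  unfolding restr_perm_def by auto

lemma restr_perm_comp:
  assumes "\<tau> ` \<Omega> \<subseteq> \<Omega>"
  shows "restr_perm \<Omega> (\<sigma> \<circ> \<tau>) = restr_perm \<Omega> \<sigma> \<circ> restr_perm \<Omega> \<tau>"
  using assms unfolding restr_perm_def by (auto simp: fun_eq_iff)

lemma restr_perm_permutes:
  assumes "\<sigma> permutes A" "\<Omega> \<subseteq> A" "finite \<Omega>" "\<sigma> ` \<Omega> \<subseteq> \<Omega>"
  shows "restr_perm \<Omega> \<sigma> permutes A"
proof -
  have "\<sigma> ` \<Omega> = \<Omega>" using endo_inj_surj[OF assms(3,4)] permutes_inj_on[OF assms(1)] by simp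
  then have "bij_betw \<sigma> \<Omega> \<Omega>" using permutes_inj_on[OF assms(1)] by (simp add: bij_betw_def)
  then have "bij_betw (restr_perm \<Omega> \<sigma>) \<Omega> \<Omega>"
    by (rule bij_betw_cong[THEN iffD1, rotated]) (simp add: restr_perm_def)
  then have "restr_perm \<Omega> \<sigma> permutes \<Omega>" by (rule bij_imp_permutes) (simp add: restr_perm_def)
  then show ?thesis using permutes_subset assms(2) by blast
qed

lemma restr_perm_group_hom:
  assumes "subgroup H (sym_group n)" "\<Omega> \<subseteq> {1..n}" and invariant: "\<And>\<sigma>. \<sigma> \<in> H \<Longrightarrow> \<sigma> ` \<Omega> \<subseteq> \<Omega>"
  shows "group_hom ((sym_group n)\<lparr>carrier := H\<rparr>) (sym_group n) (restr_perm \<Omega>)"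
proof -
  have "restr_perm \<Omega> \<sigma> \<in> carrier (sym_group n)" if "\<sigma> \<in> H" for \<sigma>
    using restr_perm_permutes[OF _ assms(2) finite_subset[OF assms(2)] invariant[OF that]]
      subgroup.mem_carrier[OF assms(1) that] by (simp add: sym_group_carrier)
  then have "restr_perm \<Omega> \<in> hom ((sym_group n)\<lparr>carrier := H\<rparr>) (sym_group n)"
    unfolding hom_def using restr_perm_comp invariant by (auto simp: sym_group_mult)
  then show ?thesis
    using group.subgroup_imp_group[OF sym_group_is_group assms(1)] sym_group_is_group
    by (simp add: group_hom_def group_hom_axioms_def)
qed

lemma permutes_eq_id_if_restr_perm_eq_id:
  assumes "\<sigma> permutes A" "A \<subseteq> (\<Union>i\<in>I. \<Omega> i)" and restr: "\<And>i. i \<in> I \<Longrightarrow> restr_perm (\<Omega> i) \<sigma> = id"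
  shows "\<sigma> = id"
proof
  fix x show "\<sigma> x = id x"
  proof (cases "x \<in> A")
    case True
    then obtain i where "i \<in> I" "x \<in> \<Omega> i" using assms(2) by blast
    then show ?thesis using fun_cong[OF restr[of i], of x] unfolding restr_perm_def by simp
  qed (simp add: permutes_not_in[OF assms(1)])
qed

lemma transport_perm_apply:
  assumes "inj_on f \<Omega>" "x \<in> \<Omega>"
  shows "transport_perm f \<Omega> \<sigma> (f x) = f (\<sigma> x)"
  using assms unfolding transport_perm_def by simp

lemma transport_perm_id:
  assumes "inj_on f \<Omega>"
  shows "transport_perm f \<Omega> id = id"
  using assms unfolding transport_perm_def by (auto simp: f_inv_into_f)

lemma transport_perm_comp:
  assumes "inj_on f \<Omega>" "\<tau> ` \<Omega> \<subseteq> \<Omega>"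
  shows "transport_perm f \<Omega> (\<sigma> \<circ> \<tau>) = transport_perm f \<Omega> \<sigma> \<circ> transport_perm f \<Omega> \<tau>"
proof
  fix y show "transport_perm f \<Omega> (\<sigma> \<circ> \<tau>) y = (transport_perm f \<Omega> \<sigma> \<circ> transport_perm f \<Omega> \<tau>) y"
  proof (cases "y \<in> f ` \<Omega>")
    case True
    then obtain x where "x \<in> \<Omega>" "y = f x" by blast
    then show ?thesis using assms by (auto simp: transport_perm_apply)
  qed (simp add: transport_perm_def)
qed

lemma transport_perm_inj:
  assumes "inj_on f \<Omega>" "\<sigma> ` \<Omega> \<subseteq> \<Omega>" "\<tau> ` \<Omega> \<subseteq> \<Omega>"
    and "\<And>x. x \<notin> \<Omega> \<Longrightarrow> \<sigma> x = x" "\<And>x. x \<notin> \<Omega> \<Longrightarrow> \<tau> x = x"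
    and eq: "transport_perm f \<Omega> \<sigma> = transport_perm f \<Omega> \<tau>"
  shows "\<sigma> = \<tau>"
proof
  fix x show "\<sigma> x = \<tau> x"
  proof (cases "x \<in> \<Omega>")
    case True
    then have "f (\<sigma> x) = f (\<tau> x)"
      using eq transport_perm_apply[OF assms(1) True] by metis
    then show ?thesis using True assms(1-3) by (meson image_subset_iff inj_onD)
  qed (simp add: assms(4,5))
qed

section \<open>The dihedral group of degree p\<close>

text \<open>The maps with a = 1 are the rotations, those with a = p - 1 the reflections.\<close>

definition dihedral_map :: "nat \<Rightarrow> nat \<Rightarrow> nat \<Rightarrow> nat \<Rightarrow> nat" where
  "dihedral_map p a b = (\<lambda>x. if x < p then (a * x + b) mod p else x)"

lemma dihedral_perms_eq: "dihedral_perms p = {dihedral_map p a b | a b. a \<in> {1, p - 1} \<and> b < p}"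
  unfolding dihedral_perms_def dihedral_map_def by simp

lemma dihedral_map_apply: "x < p \<Longrightarrow> dihedral_map p a b x = (a * x + b) mod p"
  unfolding dihedral_map_def by simp

lemma dihedral_map_eq_imp_shift_eq:
  assumes "dihedral_map p a b = dihedral_map p a' c" "b < p" "c < p"
  shows "b = c"
  using fun_cong[OF assms(1), of 0] assms(2,3) by (simp add: dihedral_map_apply)

lemma dihedral_map_rotation_0: "dihedral_map p 1 0 = id"
  unfolding dihedral_map_def by auto

lemma dihedral_map_rotation_fixpoint:
  assumes "b < p" "x < p" "dihedral_map p 1 b x = x"
  shows "b = 0"
proof (rule ccontr)
  assume "b \<noteq> 0"
  have "(x + b) mod p = x" using assms by (simp add: dihedral_map_apply)
  moreover have "(x + b) mod p = (if x + b < p then x + b else x + b - p)"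
    using assms(1,2) by (simp add: le_mod_geq)
  ultimately show False using \<open>b \<noteq> 0\<close> assms(1) by (auto split: if_splits)
qed

lemma dihedral_map_rotation_transitive:
  assumes "x < p" "y < p"
  shows "dihedral_map p 1 ((y + p - x) mod p) x = y"
proof -
  have "dihedral_map p 1 ((y + p - x) mod p) x = (x + (y + p - x)) mod p"
    using assms by (simp add: dihedral_map_apply mod_add_right_eq)
  also have "x + (y + p - x) = y + p" using assms by simp
  finally show ?thesis using assms by simp
qed

lemma dihedral_map_reflection_fixes_iff:
  assumes "x < p" "b < p"
  shows "dihedral_map p (p - 1) b x = x \<longleftrightarrow> (2 * x) mod p = b"
proof -
  have px: "(p - 1) * x + x = p * x" using assms by (cases p) simp_all
  have "((p - 1) * x + b) mod p = x \<longleftrightarrow> (2 * x) mod p = b"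
  proof
    assume fixed: "((p - 1) * x + b) mod p = x"
    have "(2 * x) mod p = (((p - 1) * x + b) mod p + x) mod p" unfolding fixed by (simp add: mult_2)
    also have "\<dots> = ((p - 1) * x + b + x) mod p" by (rule mod_add_left_eq)
    also have "(p - 1) * x + b + x = p * x + b" using px by simp
    also have "(p * x + b) mod p = b" using assms(2) by simp
    finally show "(2 * x) mod p = b" .
  next
    assume b: "(2 * x) mod p = b"
    have "((p - 1) * x + b) mod p = ((p - 1) * x + 2 * x) mod p"
      unfolding b[symmetric] by (rule mod_add_right_eq)
    also have "(p - 1) * x + 2 * x = p * x + x" using px by simp
    also have "(p * x + x) mod p = x" using assms(1) by simp
    finally show "((p - 1) * x + b) mod p = x" .
  qed
  then show ?thesis using assms(1) by (simp add: dihedral_map_apply)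
qed

lemma dihedral_map_reflection_involution:
  assumes "2 \<le> p" "b < p"
  shows "dihedral_map p (p - 1) b \<circ> dihedral_map p (p - 1) b = id"
proof
  obtain q where q: "p = Suc (Suc q)" using assms(1) by (metis add_2_eq_Suc le_Suc_ex)
  fix x show "(dihedral_map p (p - 1) b \<circ> dihedral_map p (p - 1) b) x = id x"
  proof (cases "x < p")
    case True
    have "(dihedral_map p (p - 1) b \<circ> dihedral_map p (p - 1) b) x
        = ((p - 1) * (((p - 1) * x + b) mod p) + b) mod p"
      using True by (simp add: dihedral_map_apply)
    also have "\<dots> = ((p - 1) * ((p - 1) * x + b) + b) mod p"
      by (metis mod_add_left_eq mod_mult_right_eq)
    also have "(p - 1) * ((p - 1) * x + b) + b = x + p * (q * x + b)"
      unfolding q by (simp add: algebra_simps)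
    finally show ?thesis using True by simp
  qed (simp add: dihedral_map_def)
qed

lemma dihedral_map_reflection_neq_id:
  assumes "3 \<le> p" "b < p"
  shows "dihedral_map p (p - 1) b \<noteq> id"
proof
  assume "dihedral_map p (p - 1) b = id"
  then have "(2 * 0) mod p = b" "(2 * 1) mod p = b"
    using dihedral_map_reflection_fixes_iff[of 0 p b] dihedral_map_reflection_fixes_iff[of 1 p b]
      assms by simp_all
  then show False using assms(1) by simp
qed

lemma dihedral_map_reflection_fixpoint:
  assumes "odd p" "b < p"
  shows "\<exists>x<p. dihedral_map p (p - 1) b x = x"
proof -
  obtain x where x: "2 * x = (if even b then b else b + p)"
    using assms(1) by (metis dvd_add odd_add evenE)
  then have "x < p" "(2 * x) mod p = b" using assms(2) by (auto split: if_splits)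
  then show ?thesis using dihedral_map_reflection_fixes_iff assms(2) by blast
qed

lemma card_dihedral_perms:
  assumes "odd p" "1 < p"
  shows "card (dihedral_perms p) = 2 * p"
proof -
  let ?rot = "(\<lambda>b. dihedral_map p 1 b) ` {..<p}" and ?refl = "(\<lambda>b. dihedral_map p (p - 1) b) ` {..<p}"
  have "?rot \<inter> ?refl = {}"
  proof (rule ccontr)
    assume "?rot \<inter> ?refl \<noteq> {}"
    then obtain b c where bc: "b < p" "c < p" "dihedral_map p 1 b = dihedral_map p (p - 1) c" by auto
    then have "b = c" using dihedral_map_eq_imp_shift_eq[OF bc(3)] by simp
    obtain x where "x < p" "dihedral_map p (p - 1) c x = x"
      using dihedral_map_reflection_fixpoint assms(1) bc(2) by blast
    then have "b = 0" using dihedral_map_rotation_fixpoint[OF bc(1)] bc(3) by simp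
    then have "dihedral_map p (p - 1) 0 = id" using bc \<open>b = c\<close> dihedral_map_rotation_0 by metis
    moreover have "3 \<le> p" using assms by presburger
    ultimately show False using dihedral_map_reflection_neq_id[of p 0] by simp
  qed
  moreover have "inj_on (dihedral_map p a) {..<p}" for a
    by (rule inj_onI) (simp add: dihedral_map_eq_imp_shift_eq)
  moreover have "dihedral_perms p = ?rot \<union> ?refl" unfolding dihedral_perms_eq by auto
  ultimately show ?thesis by (simp add: card_Un_disjoint card_image)
qed

section \<open>A dihedral block and its Sylow p-subgroup\<close>

locale dihedral_block =
  fixes p n :: nat and D P :: "(nat \<Rightarrow> nat) set" and \<Omega> :: "nat set"
  assumes p_prime: "prime p" and p_odd: "odd p"
    and D_subgroup: "subgroup D (sym_group n)"
    and D_invariant: "\<And>\<sigma>. \<sigma> \<in> D \<Longrightarrow> \<sigma> ` \<Omega> \<subseteq> \<Omega>"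
    and D_support: "\<And>\<sigma> x. \<sigma> \<in> D \<Longrightarrow> x \<notin> \<Omega> \<Longrightarrow> \<sigma> x = x"
    and D_dihedral: "perm_isomorphic D \<Omega> (dihedral_perms p) {0..<p}"
    and P_sylow: "is_sylow ((sym_group n)\<lparr>carrier := D\<rparr>) p P"
begin

definition label :: "nat \<Rightarrow> nat" where
  "label = (SOME f. bij_betw f \<Omega> {0..<p} \<and> transport_perm f \<Omega> ` D = dihedral_perms p)"

abbreviation relabel :: "(nat \<Rightarrow> nat) \<Rightarrow> nat \<Rightarrow> nat" where
  "relabel \<equiv> transport_perm label \<Omega>"

lemma label_bij: "bij_betw label \<Omega> {0..<p}" and relabel_D: "relabel ` D = dihedral_perms p"
  using someI_ex[OF D_dihedral[unfolded perm_isomorphic_def]] unfolding label_def by simp_all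

lemma label_inj: "inj_on label \<Omega>"
  using label_bij by (simp add: bij_betw_def)

lemma label_image: "label ` \<Omega> = {0..<p}"
  using label_bij by (simp add: bij_betw_def)

lemma three_le_p: "3 \<le> p"
  using prime_ge_2_nat[OF p_prime] p_odd by presburger

lemma id_in_D: "id \<in> D"
  using subgroup.one_closed[OF D_subgroup] by (simp add: sym_group_one)

lemma comp_in_D: "\<sigma> \<in> D \<Longrightarrow> \<tau> \<in> D \<Longrightarrow> \<sigma> \<circ> \<tau> \<in> D"
  using subgroup.m_closed[OF D_subgroup] by (simp add: sym_group_mult)

lemma relabel_comp: "\<tau> \<in> D \<Longrightarrow> relabel (\<sigma> \<circ> \<tau>) = relabel \<sigma> \<circ> relabel \<tau>"
  using transport_perm_comp[OF label_inj D_invariant] .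

lemma relabel_inj: "\<sigma> \<in> D \<Longrightarrow> \<tau> \<in> D \<Longrightarrow> relabel \<sigma> = relabel \<tau> \<Longrightarrow> \<sigma> = \<tau>"
  using transport_perm_inj[OF label_inj D_invariant D_invariant] D_support by blast

lemma relabel_apply: "x \<in> \<Omega> \<Longrightarrow> relabel \<sigma> (label x) = label (\<sigma> x)"
  using transport_perm_apply[OF label_inj] .

lemma relabel_cases:
  assumes "\<sigma> \<in> D"
  obtains b where "b < p" "relabel \<sigma> = dihedral_map p 1 b" | b where "b < p" "relabel \<sigma> = dihedral_map p (p - 1) b"
proof -
  have "relabel \<sigma> \<in> dihedral_perms p" unfolding relabel_D[symmetric] using assms by (rule imageI)
  then obtain a b where "a \<in> {1, p - 1}" "b < p" "relabel \<sigma> = dihedral_map p a b"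
    unfolding dihedral_perms_eq by blast
  then show ?thesis using that by blast
qed

lemma relabel_surj:
  assumes "b < p" "a \<in> {1, p - 1}"
  obtains \<sigma> where "\<sigma> \<in> D" "relabel \<sigma> = dihedral_map p a b"
proof -
  have "dihedral_map p a b \<in> relabel ` D" unfolding relabel_D dihedral_perms_eq using assms by auto
  then show ?thesis using that by (metis imageE)
qed

lemma card_D: "card D = 2 * p"
proof -
  have "inj_on relabel D" using relabel_inj by (intro inj_onI)
  then have "card D = card (relabel ` D)" by (simp add: card_image)
  then show ?thesis using relabel_D card_dihedral_perms p_odd three_le_p by simp
qed

lemma finite_D: "finite D"
  using card_D three_le_p by (intro card_ge_0_finite) simp

definition rotations :: "(nat \<Rightarrow> nat) set" where
  "rotations = {\<sigma> \<in> D. \<exists>b<p. relabel \<sigma> = dihedral_map p 1 b}"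

lemma card_rotations: "card rotations = p"
proof -
  have "relabel ` rotations = dihedral_map p 1 ` {..<p}"
  proof
    show "relabel ` rotations \<subseteq> dihedral_map p 1 ` {..<p}" unfolding rotations_def by auto
    show "dihedral_map p 1 ` {..<p} \<subseteq> relabel ` rotations"
    proof
      fix g assume "g \<in> dihedral_map p 1 ` {..<p}"
      then obtain b where b: "b < p" "g = dihedral_map p 1 b" by blast
      then obtain \<sigma> where "\<sigma> \<in> D" "relabel \<sigma> = g" using relabel_surj[of b 1] by auto
      then show "g \<in> relabel ` rotations" unfolding rotations_def using b by blast
    qed
  qed
  moreover have "inj_on relabel rotations"
    by (rule inj_onI) (use relabel_inj in \<open>simp add: rotations_def\<close>)
  moreover have "inj_on (dihedral_map p 1) {..<p}"
    by (rule inj_onI) (simp add: dihedral_map_eq_imp_shift_eq)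
  ultimately show ?thesis by (metis card_image card_lessThan)
qed

lemma relabel_reflection:
  assumes "\<sigma> \<in> D" "\<sigma> \<notin> rotations"
  obtains b where "b < p" "relabel \<sigma> = dihedral_map p (p - 1) b"
  using relabel_cases[OF assms(1)] assms unfolding rotations_def by blast

lemma reflection_involution:
  assumes "\<sigma> \<in> D" "\<sigma> \<notin> rotations"
  shows "\<sigma> \<circ> \<sigma> = id" "\<sigma> \<noteq> id"
proof -
  obtain b where b: "b < p" "relabel \<sigma> = dihedral_map p (p - 1) b"
    using relabel_reflection[OF assms] .
  have "relabel (\<sigma> \<circ> \<sigma>) = relabel id"
    using relabel_comp[OF assms(1)] b dihedral_map_reflection_involution three_le_p
      transport_perm_id[OF label_inj] by simp
  then show "\<sigma> \<circ> \<sigma> = id" using relabel_inj comp_in_D[OF assms(1,1)] id_in_D by blast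
  show "\<sigma> \<noteq> id"
    using b dihedral_map_reflection_neq_id[OF three_le_p b(1)] transport_perm_id[OF label_inj] by auto
qed

lemma P_subgroup: "subgroup P (sym_group n)"
  using P_sylow group.incl_subgroup[OF sym_group_is_group D_subgroup] unfolding is_sylow_def by blast

lemma P_subset_D: "P \<subseteq> D"
  using P_sylow subgroup.subset unfolding is_sylow_def by force

lemma card_P: "card P = p"
proof -
  have "\<not> p dvd 2" using three_le_p by (auto dest: dvd_imp_le)
  then have "multiplicity p (2 * p) = 1"
    using three_le_p by (simp add: multiplicity_times_same not_dvd_imp_multiplicity_0 mult.commute[of 2])
  then show ?thesis using P_sylow card_D unfolding is_sylow_def order_def by simp
qed

lemma finite_P: "finite P"
  using card_P three_le_p by (intro card_ge_0_finite) simp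

lemma P_pow: "\<sigma> \<in> P \<Longrightarrow> \<sigma> [^]\<^bsub>sym_group n\<^esub> p = id"
  using group.pow_card_subgroup[OF sym_group_is_group P_subgroup] card_P by (simp add: sym_group_one)

lemma P_eq_rotations: "P = rotations"
proof -
  have "P \<subseteq> rotations"
  proof
    fix \<sigma> assume \<sigma>: "\<sigma> \<in> P"
    then have "\<sigma> \<in> D" using P_subset_D by blast
    show "\<sigma> \<in> rotations"
    proof (rule ccontr)
      assume "\<sigma> \<notin> rotations"
      then have "\<sigma> \<otimes>\<^bsub>sym_group n\<^esub> \<sigma> = \<one>\<^bsub>sym_group n\<^esub>" "\<sigma> \<noteq> id"
        using reflection_involution \<open>\<sigma> \<in> D\<close> by (simp_all add: sym_group_mult sym_group_one)
      moreover have "\<sigma> \<in> carrier (sym_group n)" using subgroup.mem_carrier[OF D_subgroup \<open>\<sigma> \<in> D\<close>] .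
      ultimately have "\<sigma> [^]\<^bsub>sym_group n\<^esub> p = \<sigma>"
        using group.involution_pow_odd[OF sym_group_is_group] p_odd by blast
      then show False using P_pow[OF \<sigma>] \<open>\<sigma> \<noteq> id\<close> by simp
    qed
  qed
  moreover have "finite rotations"
    using card_rotations three_le_p by (intro card_ge_0_finite) simp
  ultimately show ?thesis using card_P card_rotations by (simp add: card_subset_eq)
qed

lemma not_in_P_involution: "\<sigma> \<in> D \<Longrightarrow> \<sigma> \<notin> P \<Longrightarrow> \<sigma> \<circ> \<sigma> = id \<and> \<sigma> \<noteq> id"
  using reflection_involution P_eq_rotations by simp

lemma relabel_apply_eq:
  assumes "\<sigma> \<in> D" "x \<in> \<Omega>" "y \<in> \<Omega>"
  shows "relabel \<sigma> (label x) = label y \<longleftrightarrow> \<sigma> x = y"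
  using relabel_apply[OF assms(2)] D_invariant[OF assms(1)] assms(2,3) label_inj
  by (metis image_subset_iff inj_onD)

lemma P_fixpoint_free:
  assumes "\<sigma> \<in> P" "x \<in> \<Omega>" "\<sigma> x = x"
  shows "\<sigma> = id"
proof -
  obtain b where b: "b < p" "relabel \<sigma> = dihedral_map p 1 b"
    using assms(1) unfolding P_eq_rotations rotations_def by blast
  have "\<sigma> \<in> D" using assms(1) P_subset_D by blast
  then have "dihedral_map p 1 b (label x) = label x" using relabel_apply_eq assms(2,3) b(2) by metis
  moreover have "label x < p" using label_image assms(2) by auto
  ultimately have "b = 0" using dihedral_map_rotation_fixpoint b(1) by blast
  then have "relabel \<sigma> = relabel id"
    using b transport_perm_id[OF label_inj] dihedral_map_rotation_0 by metis
  then show "\<sigma> = id" using relabel_inj \<open>\<sigma> \<in> D\<close> id_in_D by blast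
qed

lemma P_transitive:
  assumes "x \<in> \<Omega>" "y \<in> \<Omega>"
  obtains \<sigma> where "\<sigma> \<in> P" "\<sigma> x = y"
proof -
  have xy: "label x < p" "label y < p" using label_image assms by auto
  define b where "b = (label y + p - label x) mod p"
  have "b < p" using three_le_p unfolding b_def by simp
  then obtain \<sigma> where \<sigma>: "\<sigma> \<in> D" "relabel \<sigma> = dihedral_map p 1 b" using relabel_surj by blast
  then have "\<sigma> \<in> P" unfolding P_eq_rotations rotations_def using \<open>b < p\<close> by blast
  moreover have "\<sigma> x = y"
    using \<sigma> relabel_apply_eq assms dihedral_map_rotation_transitive[OF xy] unfolding b_def by metis
  ultimately show ?thesis by (rule that)
qed

lemma not_in_P_fixpoint:
  assumes "\<sigma> \<in> D" "\<sigma> \<notin> P"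
  obtains \<alpha> where "\<alpha> \<in> \<Omega>" "\<sigma> \<alpha> = \<alpha>"
proof -
  obtain b where b: "b < p" "relabel \<sigma> = dihedral_map p (p - 1) b"
    using relabel_reflection assms P_eq_rotations by blast
  obtain x where x: "x < p" "dihedral_map p (p - 1) b x = x"
    using dihedral_map_reflection_fixpoint[OF p_odd b(1)] by blast
  then obtain \<alpha> where "\<alpha> \<in> \<Omega>" "label \<alpha> = x" using label_image by (metis atLeastLessThan_iff imageE zero_le)
  then show ?thesis using that relabel_apply_eq[OF assms(1)] b(2) x(2) by metis
qed

lemma not_in_P_fixpoint_unique:
  assumes "\<sigma> \<in> D" "\<sigma> \<notin> P" "\<tau> \<in> D" "\<tau> \<notin> P" "\<alpha> \<in> \<Omega>" "\<sigma> \<alpha> = \<alpha>" "\<tau> \<alpha> = \<alpha>"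
  shows "\<sigma> = \<tau>"
proof -
  obtain b c where b: "b < p" "relabel \<sigma> = dihedral_map p (p - 1) b"
    and c: "c < p" "relabel \<tau> = dihedral_map p (p - 1) c"
    using relabel_reflection assms(1-4) P_eq_rotations by metis
  have "label \<alpha> < p" using label_image assms(5) by auto
  moreover have "dihedral_map p (p - 1) b (label \<alpha>) = label \<alpha>" "dihedral_map p (p - 1) c (label \<alpha>) = label \<alpha>"
    using relabel_apply_eq assms b(2) c(2) by metis+
  ultimately have "b = c" using dihedral_map_reflection_fixes_iff b(1) c(1) by metis
  then show ?thesis using relabel_inj assms(1,3) b(2) c(2) by simp
qed


lemma stabilizer_eq_reflection:
  assumes r: "r \<in> D" "r \<notin> P" and \<alpha>: "\<alpha> \<in> \<Omega>" "r \<alpha> = \<alpha>"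
  shows "{g \<in> D. g \<alpha> = \<alpha>} = {id, r}"
proof
  show "{id, r} \<subseteq> {g \<in> D. g \<alpha> = \<alpha>}" using id_in_D r \<alpha> by auto
  show "{g \<in> D. g \<alpha> = \<alpha>} \<subseteq> {id, r}"
  proof (intro subsetI, elim CollectE conjE)
    fix g assume g: "g \<in> D" "g \<alpha> = \<alpha>"
    show "g \<in> {id, r}"
    proof (cases "g \<in> P")
      case True
      then show ?thesis using P_fixpoint_free \<alpha>(1) g(2) by simp
    next
      case False
      then show ?thesis using not_in_P_fixpoint_unique[OF g(1) False r \<alpha>(1) g(2) \<alpha>(2)] by simp
    qed
  qed
qed
end

section \<open>Permutation groups with dihedral blocks\<close>

locale dihedral_block_group =
  fixes p k n :: nat and H Hp H2 :: "(nat \<Rightarrow> nat) set"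
    and \<Omega> :: "nat \<Rightarrow> nat set" and Gi :: "nat \<Rightarrow> (nat \<Rightarrow> nat) set"
  assumes p_prime: "prime p" and p_odd: "odd p"
    and H_subgroup: "subgroup H (sym_group n)"
    and orbits_H: "orbits ((sym_group n)\<lparr>carrier := H\<rparr>) {1..n} (\<lambda>g. g) = \<Omega> ` {1..k}"
    and dihedral: "\<forall>i \<in> {1..k}. perm_isomorphic (restr_group (\<Omega> i) H) (\<Omega> i) (dihedral_perms p) {0..<p}"
    and Gi_sylow: "\<forall>i \<in> {1..k}. is_sylow ((sym_group n)\<lparr>carrier := restr_group (\<Omega> i) H\<rparr>) p (Gi i)"
    and Hp_sylow: "is_sylow ((sym_group n)\<lparr>carrier := H\<rparr>) p Hp"
    and H2_sylow: "is_sylow ((sym_group n)\<lparr>carrier := H\<rparr>) 2 H2"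
begin

abbreviation "S \<equiv> sym_group n"
abbreviation "R i \<equiv> restr_perm (\<Omega> i)"
abbreviation "D i \<equiv> restr_group (\<Omega> i) H"
abbreviation "G \<equiv> direct_prod_perms n k \<Omega> Gi"

sublocale S: group S by (rule sym_group_is_group)
sublocale GH: group "S\<lparr>carrier := H\<rparr>" using S.subgroup_imp_group[OF H_subgroup] .

lemmas pow_restrict_carrier [simp] = S.nat_pow_consistent[symmetric]

lemma H_carrier: "H \<subseteq> carrier S" using subgroup.subset[OF H_subgroup] .

lemma finite_H: "finite H"
  using finite_subset[OF H_carrier] by (simp add: sym_group_def finite_permutations)

lemma orbit_H: "orbit (S\<lparr>carrier := H\<rparr>) (\<lambda>g. g) x = {g x | g. g \<in> H}"
  unfolding orbit_def by simp

lemma block_orbit: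
  assumes "i \<in> {1..k}"
  obtains x where "x \<in> {1..n}" "\<Omega> i = {g x | g. g \<in> H}"
proof -
  have "\<Omega> i \<in> orbits (S\<lparr>carrier := H\<rparr>) {1..n} (\<lambda>g. g)" using orbits_H assms by simp
  then show ?thesis using that unfolding orbits_def orbit_H by blast
qed

lemma block_invariant:
  assumes "i \<in> {1..k}" "\<sigma> \<in> H"
  shows "\<sigma> ` \<Omega> i \<subseteq> \<Omega> i"
proof
  fix y assume "y \<in> \<sigma> ` \<Omega> i"
  moreover obtain x where "\<Omega> i = {g x | g. g \<in> H}" using block_orbit[OF assms(1)] .
  ultimately obtain g where "g \<in> H" "y = (\<sigma> \<circ> g) x" by auto
  moreover have "\<sigma> \<circ> g \<in> H" using subgroup.m_closed[OF H_subgroup assms(2) \<open>g \<in> H\<close>] by (simp add: sym_group_mult)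
  ultimately show "y \<in> \<Omega> i" using \<open>\<Omega> i = _\<close> by blast
qed

lemma block_subset: "i \<in> {1..k} \<Longrightarrow> \<Omega> i \<subseteq> {1..n}"
proof -
  assume "i \<in> {1..k}"
  then obtain x where "x \<in> {1..n}" "\<Omega> i = {g x | g. g \<in> H}" using block_orbit by blast
  moreover have "g x \<in> {1..n}" if "g \<in> H" "x \<in> {1..n}" for g
    using permutes_in_image[of g "{1..n}" x] subsetD[OF H_carrier that(1)] that(2)
    by (simp add: sym_group_carrier)
  ultimately show ?thesis by auto
qed

lemma block_cover:
  assumes "x \<in> {1..n}"
  obtains i where "i \<in> {1..k}" "orbit (S\<lparr>carrier := H\<rparr>) (\<lambda>g. g) x = \<Omega> i" "x \<in> \<Omega> i"
proof -
  have "orbit (S\<lparr>carrier := H\<rparr>) (\<lambda>g. g) x \<in> \<Omega> ` {1..k}"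
    using orbits_H assms unfolding orbits_def by blast
  moreover have "id \<in> H" using subgroup.one_closed[OF H_subgroup] by (simp add: sym_group_one)
  then have "x \<in> orbit (S\<lparr>carrier := H\<rparr>) (\<lambda>g. g) x"
    unfolding orbit_H by (intro CollectI exI[of _ id]) simp
  ultimately show ?thesis using that by auto
qed

lemma restr_hom: "i \<in> {1..k} \<Longrightarrow> group_hom (S\<lparr>carrier := H\<rparr>) S (R i)"
  using restr_perm_group_hom[OF H_subgroup block_subset block_invariant] .

lemma D_subgroup: "i \<in> {1..k} \<Longrightarrow> subgroup (D i) S"
  using group_hom.img_is_subgroup[OF restr_hom] unfolding restr_group_def by simp

lemma block_dihedral: "i \<in> {1..k} \<Longrightarrow> dihedral_block p n (D i) (Gi i) (\<Omega> i)"
proof (rule dihedral_block.intro)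
  fix \<sigma> assume "i \<in> {1..k}" "\<sigma> \<in> D i"
  then obtain \<tau> where "\<tau> \<in> H" "\<sigma> = R i \<tau>" unfolding restr_group_def by blast
  then show "\<sigma> ` \<Omega> i \<subseteq> \<Omega> i" "\<And>x. x \<notin> \<Omega> i \<Longrightarrow> \<sigma> x = x"
    using block_invariant[OF \<open>i \<in> {1..k}\<close>] unfolding restr_perm_def by auto
qed (use p_prime p_odd D_subgroup dihedral Gi_sylow in simp_all)

lemma restr_in_D: "\<sigma> \<in> H \<Longrightarrow> R i \<sigma> \<in> D i"
  unfolding restr_group_def by blast

lemma restr_pow: "i \<in> {1..k} \<Longrightarrow> \<sigma> \<in> H \<Longrightarrow> R i (\<sigma> [^]\<^bsub>S\<^esub> (m::nat)) = R i \<sigma> [^]\<^bsub>S\<^esub> m"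
  using group_hom.hom_nat_pow[OF restr_hom, of i \<sigma> m] by simp

lemma pow_in_H: "\<sigma> \<in> H \<Longrightarrow> \<sigma> [^]\<^bsub>S\<^esub> (m::nat) \<in> H"
  using GH.nat_pow_closed[of \<sigma> m] by simp

lemma eq_id_if_restr_eq_id:
  assumes "\<sigma> \<in> carrier S" "\<And>i. i \<in> {1..k} \<Longrightarrow> R i \<sigma> = id"
  shows "\<sigma> = id"
proof (rule permutes_eq_id_if_restr_perm_eq_id)
  show "\<sigma> permutes {1..n}" using assms(1) by (simp add: sym_group_carrier)
  show "{1..n} \<subseteq> (\<Union>i\<in>{1..k}. \<Omega> i)"
  proof
    fix x assume "x \<in> {1..n}"
    then obtain i where "i \<in> {1..k}" "x \<in> \<Omega> i" using block_cover by blast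
    then show "x \<in> (\<Union>i\<in>{1..k}. \<Omega> i)" by blast
  qed
qed (rule assms(2))

lemma pow_2p_eq_id:
  assumes "\<sigma> \<in> H"
  shows "\<sigma> [^]\<^bsub>S\<^esub> (2 * p) = id"
proof (rule eq_id_if_restr_eq_id)
  show "\<sigma> [^]\<^bsub>S\<^esub> (2 * p) \<in> carrier S" using pow_in_H[OF assms] H_carrier by blast
  fix i assume i: "i \<in> {1..k}"
  interpret B: dihedral_block p n "D i" "Gi i" "\<Omega> i" using block_dihedral[OF i] .
  have "R i \<sigma> [^]\<^bsub>S\<^esub> card (D i) = \<one>\<^bsub>S\<^esub>"
    using S.pow_card_subgroup[OF D_subgroup[OF i] restr_in_D[OF assms]] .
  then show "R i (\<sigma> [^]\<^bsub>S\<^esub> (2 * p)) = id" using restr_pow[OF i assms] B.card_D by (simp add: sym_group_one)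
qed

lemma Hp_subgroup_H: "subgroup Hp (S\<lparr>carrier := H\<rparr>)"
  using Hp_sylow unfolding is_sylow_def by blast

lemma H2_subgroup_H: "subgroup H2 (S\<lparr>carrier := H\<rparr>)"
  using H2_sylow unfolding is_sylow_def by blast

lemma Hp_subgroup: "subgroup Hp S"
  using S.incl_subgroup[OF H_subgroup Hp_subgroup_H] .

lemma H2_subgroup: "subgroup H2 S"
  using S.incl_subgroup[OF H_subgroup H2_subgroup_H] .

lemma Hp_subset: "Hp \<subseteq> H"
  using subgroup.subset[OF Hp_subgroup_H] by simp

lemma H2_subset: "H2 \<subseteq> H"
  using subgroup.subset[OF H2_subgroup_H] by simp

lemma card_Hp: "card Hp = p ^ multiplicity p (card H)"
  using Hp_sylow unfolding is_sylow_def by (simp add: order_def)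

lemma card_H2: "card H2 = 2 ^ multiplicity 2 (card H)"
  using H2_sylow unfolding is_sylow_def by (simp add: order_def)

text \<open>An element of D_i outside G_i is an involution, hence equal to its own odd powers.\<close>

lemma restr_in_Gi_if_pow_odd:
  assumes i: "i \<in> {1..k}" and \<sigma>: "\<sigma> \<in> H" and N: "\<sigma> [^]\<^bsub>S\<^esub> (N::nat) = id" "odd N"
  shows "R i \<sigma> \<in> Gi i"
proof (rule ccontr)
  interpret B: dihedral_block p n "D i" "Gi i" "\<Omega> i" using block_dihedral[OF i] .
  assume "R i \<sigma> \<notin> Gi i"
  then have inv: "R i \<sigma> \<otimes>\<^bsub>S\<^esub> R i \<sigma> = \<one>\<^bsub>S\<^esub>" "R i \<sigma> \<noteq> id"
    using B.not_in_P_involution restr_in_D[OF \<sigma>] by (simp_all add: sym_group_mult sym_group_one)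
  have "R i \<sigma> \<in> carrier S" using subgroup.mem_carrier[OF D_subgroup[OF i] restr_in_D[OF \<sigma>]] .
  then have "R i \<sigma> [^]\<^bsub>S\<^esub> N = R i \<sigma>" using S.involution_pow_odd inv(1) N(2) by blast
  moreover have "R i \<sigma> [^]\<^bsub>S\<^esub> N = id" using restr_pow[OF i \<sigma>, of N, symmetric] N(1) by simp
  ultimately show False using inv(2) by simp
qed

lemma pow_p_eq_id_if_restr_in_Gi:
  assumes \<sigma>: "\<sigma> \<in> H" and restr: "\<And>i. i \<in> {1..k} \<Longrightarrow> R i \<sigma> \<in> Gi i"
  shows "\<sigma> [^]\<^bsub>S\<^esub> p = id"
proof (rule eq_id_if_restr_eq_id)
  show "\<sigma> [^]\<^bsub>S\<^esub> p \<in> carrier S" using pow_in_H[OF \<sigma>] H_carrier by blast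
  fix i assume i: "i \<in> {1..k}"
  interpret B: dihedral_block p n "D i" "Gi i" "\<Omega> i" using block_dihedral[OF i] .
  show "R i (\<sigma> [^]\<^bsub>S\<^esub> p) = id" using restr_pow[OF i \<sigma>] B.P_pow[OF restr[OF i]] by simp
qed

lemma subgroup_H_inter_G: "subgroup (H \<inter> G) S"
proof (rule S.subgroupI)
  have "R i id \<in> Gi i" if "i \<in> {1..k}" for i
    using subgroup.one_closed[OF dihedral_block.P_subgroup[OF block_dihedral[OF that]]] by (simp add: sym_group_one)
  then have "id \<in> H \<inter> G"
    using subgroup.one_closed[OF H_subgroup] S.one_closed unfolding direct_prod_perms_def
    by (simp add: sym_group_one)
  then show "H \<inter> G \<noteq> {}" by blast
  show "H \<inter> G \<subseteq> carrier S" using H_carrier by blast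
next
  fix a assume a: "a \<in> H \<inter> G"
  have "R i (inv\<^bsub>S\<^esub> a) \<in> Gi i" if i: "i \<in> {1..k}" for i
  proof -
    have "R i (inv\<^bsub>S\<^esub> a) = inv\<^bsub>S\<^esub> (R i a)"
      using group_hom.hom_inv[OF restr_hom[OF i]] S.m_inv_consistent[OF H_subgroup] a by simp
    then show ?thesis
      using subgroup.m_inv_closed[OF dihedral_block.P_subgroup[OF block_dihedral[OF i]]] a i
      unfolding direct_prod_perms_def by simp
  qed
  moreover have "inv\<^bsub>S\<^esub> a \<in> H" using subgroup.m_inv_closed[OF H_subgroup] a by blast
  ultimately show "inv\<^bsub>S\<^esub> a \<in> H \<inter> G"
    using H_carrier unfolding direct_prod_perms_def by blast
next
  fix a b assume a: "a \<in> H \<inter> G" and b: "b \<in> H \<inter> G"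
  have "R i (a \<otimes>\<^bsub>S\<^esub> b) \<in> Gi i" if i: "i \<in> {1..k}" for i
  proof -
    have "R i (a \<otimes>\<^bsub>S\<^esub> b) = R i a \<otimes>\<^bsub>S\<^esub> R i b"
      using group_hom.hom_mult[OF restr_hom[OF i]] a b by simp
    then show ?thesis
      using subgroup.m_closed[OF dihedral_block.P_subgroup[OF block_dihedral[OF i]]] a b i
      unfolding direct_prod_perms_def by simp
  qed
  then show "a \<otimes>\<^bsub>S\<^esub> b \<in> H \<inter> G"
    using subgroup.m_closed[OF H_subgroup] a b unfolding direct_prod_perms_def by simp
qed

lemma card_H: "card H = card H2 * card Hp"
proof -
  have "card H = 2 ^ multiplicity 2 (card H) * p ^ multiplicity p (card H)"
  proof (rule eq_prime_power_product)
    show "card H > 0" using finite_H subgroup.one_closed[OF H_subgroup] by (auto simp: card_gt_0_iff)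
    show "prime (2::nat)" "prime p" "2 \<noteq> p" using p_prime p_odd by auto
    fix r :: nat assume r: "prime r" "r dvd card H"
    have "r dvd 2 * p"
    proof (rule GH.prime_dvd_exponent[OF _ _ r(1)])
      show "finite (carrier (S\<lparr>carrier := H\<rparr>))" using finite_H by simp
      show "r dvd order (S\<lparr>carrier := H\<rparr>)" using r(2) by (simp add: order_def)
    qed (simp add: pow_2p_eq_id sym_group_one)
    then have "r dvd 2 \<or> r dvd p" using prime_dvd_mult_iff[OF r(1)] by simp
    then show "r = 2 \<or> r = p" using primes_dvd_imp_eq[OF r(1)] p_prime two_is_prime_nat by blast
  qed
  then show ?thesis using card_H2 card_Hp by simp
qed

lemma odd_card_H_inter_G: "odd (card (H \<inter> G))"
proof
  interpret K: group "S\<lparr>carrier := H \<inter> G\<rparr>" using S.subgroup_imp_group[OF subgroup_H_inter_G] .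
  assume "2 dvd card (H \<inter> G)"
  have "2 dvd p"
  proof (rule K.prime_dvd_exponent)
    show "finite (carrier (S\<lparr>carrier := H \<inter> G\<rparr>))" using finite_H by simp
    show "2 dvd order (S\<lparr>carrier := H \<inter> G\<rparr>)" using \<open>2 dvd card (H \<inter> G)\<close> by (simp add: order_def)
    fix \<sigma> assume "\<sigma> \<in> carrier (S\<lparr>carrier := H \<inter> G\<rparr>)"
    then show "\<sigma> [^]\<^bsub>S\<lparr>carrier := H \<inter> G\<rparr>\<^esub> p = \<one>\<^bsub>S\<lparr>carrier := H \<inter> G\<rparr>\<^esub>"
      using pow_p_eq_id_if_restr_in_Gi unfolding direct_prod_perms_def by (simp add: sym_group_one)
  qed simp
  then show False using p_odd by simp
qed

lemma Hp_eq_H_inter_G: "Hp = H \<inter> G"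
proof -
  have "Hp \<subseteq> H \<inter> G"
  proof
    fix \<sigma> assume \<sigma>: "\<sigma> \<in> Hp"
    then have "\<sigma> \<in> H" using Hp_subset by blast
    moreover have "\<sigma> [^]\<^bsub>S\<^esub> card Hp = id"
      using S.pow_card_subgroup[OF Hp_subgroup \<sigma>] by (simp add: sym_group_one)
    moreover have "odd (card Hp)" using card_Hp p_odd by simp
    ultimately show "\<sigma> \<in> H \<inter> G"
      using restr_in_Gi_if_pow_odd H_carrier unfolding direct_prod_perms_def by blast
  qed
  have "card (rcosets\<^bsub>S\<lparr>carrier := H\<rparr>\<^esub> (H \<inter> G)) * card (H \<inter> G) = card H2 * card Hp"
    using GH.lagrange[OF S.subgroup_incl[OF subgroup_H_inter_G H_subgroup Int_lower1]] card_H by (simp add: order_def)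
  then have "card (H \<inter> G) dvd card H2 * card Hp" by (metis dvd_triv_right)
  moreover have "coprime (card (H \<inter> G)) (card H2)"
    using odd_card_H_inter_G unfolding card_H2 by (simp add: prime_imp_coprime coprime_commute)
  ultimately have "card (H \<inter> G) dvd card Hp" by (simp add: coprime_dvd_mult_right_iff)
  then have "card (H \<inter> G) \<le> card Hp" using card_Hp p_prime by (simp add: dvd_imp_le prime_gt_0_nat)
  then show ?thesis using card_seteq[OF _ \<open>Hp \<subseteq> H \<inter> G\<close>] finite_H by simp
qed

lemma Hp_eq_torsion: "Hp = {\<sigma> \<in> H. \<sigma> [^]\<^bsub>S\<^esub> p = \<one>\<^bsub>S\<^esub>}"
  using pow_p_eq_id_if_restr_in_Gi restr_in_Gi_if_pow_odd p_odd H_carrier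
  unfolding Hp_eq_H_inter_G direct_prod_perms_def sym_group_one by blast

lemma Hp_normal: "Hp \<lhd> S\<lparr>carrier := H\<rparr>"
  using S.torsion_set_normal[OF H_subgroup Hp_subgroup Hp_eq_torsion] .

lemma normalizer_H_subset: "normalizer S H \<subseteq> normalizer S Hp"
  using S.normalizer_subset_torsion_set_normalizer[OF finite_H H_carrier Hp_eq_torsion] .

lemma Hp_inter_H2: "Hp \<inter> H2 = {id}"
proof
  show "{id} \<subseteq> Hp \<inter> H2"
    using subgroup.one_closed[OF Hp_subgroup] subgroup.one_closed[OF H2_subgroup] by (simp add: sym_group_one)
  show "Hp \<inter> H2 \<subseteq> {id}"
  proof
    fix \<sigma> assume \<sigma>: "\<sigma> \<in> Hp \<inter> H2"
    have "coprime (card Hp) (card H2)"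
      unfolding card_Hp card_H2 using p_prime p_odd by (simp add: prime_imp_coprime)
    then have "\<sigma> = \<one>\<^bsub>S\<^esub>"
      using S.pow_eq_one_coprime S.pow_card_subgroup[OF Hp_subgroup] S.pow_card_subgroup[OF H2_subgroup]
        \<sigma> subgroup.mem_carrier[OF Hp_subgroup] by blast
    then show "\<sigma> \<in> {id}" by (simp add: sym_group_one)
  qed
qed

lemma Hp_mult_H2: "Hp <#>\<^bsub>S\<^esub> H2 = H"
proof (rule card_subset_eq[OF finite_H])
  show "Hp <#>\<^bsub>S\<^esub> H2 \<subseteq> H"
    using subgroup.m_closed[OF H_subgroup] Hp_subset H2_subset unfolding set_mult_def by blast
  show "card (Hp <#>\<^bsub>S\<^esub> H2) = card H"
    using S.card_set_mult_eq[OF Hp_subgroup H2_subgroup] Hp_inter_H2 card_H by (simp add: sym_group_one)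
qed

lemma restr_Hp_subset: "i \<in> {1..k} \<Longrightarrow> R i ` Hp \<subseteq> Gi i"
  using Hp_eq_H_inter_G unfolding direct_prod_perms_def by blast

lemma restr_H2_subgroup: "i \<in> {1..k} \<Longrightarrow> subgroup (R i ` H2) S"
  using group_hom.subgroup_img_is_subgroup[OF restr_hom H2_subgroup_H] .

lemma restr_H2_inter_Gi: "i \<in> {1..k} \<Longrightarrow> R i ` H2 \<inter> Gi i = {id}"
proof
  assume i: "i \<in> {1..k}"
  interpret B: dihedral_block p n "D i" "Gi i" "\<Omega> i" using block_dihedral[OF i] .
  show "{id} \<subseteq> R i ` H2 \<inter> Gi i"
    using subgroup.one_closed[OF restr_H2_subgroup[OF i]] subgroup.one_closed[OF B.P_subgroup]
    by (simp add: sym_group_one)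
  show "R i ` H2 \<inter> Gi i \<subseteq> {id}"
  proof
    fix \<tau> assume \<tau>: "\<tau> \<in> R i ` H2 \<inter> Gi i"
    then obtain \<sigma> where \<sigma>: "\<sigma> \<in> H2" "\<tau> = R i \<sigma>" by blast
    have "\<sigma> [^]\<^bsub>S\<^esub> card H2 = id"
      using S.pow_card_subgroup[OF H2_subgroup \<sigma>(1)] by (simp add: sym_group_one)
    then have "\<tau> [^]\<^bsub>S\<^esub> card H2 = \<one>\<^bsub>S\<^esub>"
      using restr_pow[OF i, of \<sigma> "card H2"] \<sigma> H2_subset by (auto simp: sym_group_one)
    moreover have "\<tau> [^]\<^bsub>S\<^esub> p = \<one>\<^bsub>S\<^esub>" using B.P_pow \<tau> by (simp add: sym_group_one)
    moreover have "coprime p (card H2)"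
      unfolding card_H2 using p_prime p_odd by (simp add: prime_imp_coprime)
    moreover have "\<tau> \<in> carrier S" using \<tau> subgroup.mem_carrier[OF B.P_subgroup] by blast
    ultimately have "\<tau> = \<one>\<^bsub>S\<^esub>" using S.pow_eq_one_coprime by blast
    then show "\<tau> \<in> {id}" by (simp add: sym_group_one)
  qed
qed

lemma D_eq_restr_mult: "i \<in> {1..k} \<Longrightarrow> D i = R i ` Hp <#>\<^bsub>S\<^esub> R i ` H2"
proof -
  assume i: "i \<in> {1..k}"
  have "R i ` (Hp <#>\<^bsub>S\<lparr>carrier := H\<rparr>\<^esub> H2) = R i ` Hp <#>\<^bsub>S\<^esub> R i ` H2"
    by (rule set_mult_hom[OF group_hom.homh[OF restr_hom[OF i]]]) (use Hp_subset H2_subset in simp_all)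
  moreover have "Hp <#>\<^bsub>S\<lparr>carrier := H\<rparr>\<^esub> H2 = H" using Hp_mult_H2 by (simp add: set_mult_def)
  ultimately show ?thesis unfolding restr_group_def by simp
qed

lemma card_restr_H2_le: "i \<in> {1..k} \<Longrightarrow> card (R i ` H2) \<le> 2"
proof -
  assume i: "i \<in> {1..k}"
  interpret B: dihedral_block p n "D i" "Gi i" "\<Omega> i" using block_dihedral[OF i] .
  have "Gi i <#>\<^bsub>S\<^esub> R i ` H2 \<subseteq> D i"
    using subgroup.m_closed[OF D_subgroup[OF i]] B.P_subset_D restr_in_D H2_subset
    unfolding set_mult_def by blast
  then have "card (Gi i <#>\<^bsub>S\<^esub> R i ` H2) \<le> 2 * p"
    using card_mono[OF B.finite_D] B.card_D by metis
  moreover have "card (Gi i <#>\<^bsub>S\<^esub> R i ` H2) = p * card (R i ` H2)"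
    using S.card_set_mult_eq[OF B.P_subgroup restr_H2_subgroup[OF i]] restr_H2_inter_Gi[OF i] B.card_P
    by (simp add: sym_group_one Int_commute)
  ultimately show ?thesis using B.three_le_p by simp
qed

text \<open>Counting in D_i = (H_p|Omega_i)(H_2|Omega_i): 2p \<le> |H_p|Omega_i| |H_2|Omega_i| \<le> p * 2.\<close>

lemma card_restr_Hp_H2:
  assumes i: "i \<in> {1..k}"
  shows "card (R i ` Hp) = p \<and> card (R i ` H2) = 2"
proof -
  interpret B: dihedral_block p n "D i" "Gi i" "\<Omega> i" using block_dihedral[OF i] .
  let ?a = "card (R i ` Hp)" and ?b = "card (R i ` H2)"
  have a: "?a \<le> p" using card_mono[OF B.finite_P restr_Hp_subset[OF i]] B.card_P by simp
  have b: "?b \<le> 2" using card_restr_H2_le[OF i] .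
  have "finite (R i ` Hp)" using finite_subset[OF restr_Hp_subset[OF i] B.finite_P] .
  moreover have "finite (R i ` H2)" using finite_subset[OF H2_subset finite_H] by simp
  ultimately have ab: "2 * p \<le> ?a * ?b"
    using card_set_mult_le[of _ _ S] D_eq_restr_mult[OF i] B.card_D by metis
  have "?a * ?b \<le> ?a * 2" using b by simp
  then have "?a = p" using a ab by linarith
  moreover have "?a * ?b \<le> p * ?b" using a by simp
  then have "p * 2 \<le> p * ?b" using ab by linarith
  then have "?b = 2" using b B.three_le_p by simp
  ultimately show ?thesis by simp
qed

lemma restr_group_Hp:
  assumes i: "i \<in> {1..k}"
  shows "restr_group (\<Omega> i) Hp = Gi i"
proof -
  interpret B: dihedral_block p n "D i" "Gi i" "\<Omega> i" using block_dihedral[OF i] .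
  show ?thesis
    using card_seteq[OF B.finite_P restr_Hp_subset[OF i]] card_restr_Hp_H2[OF i] B.card_P
    unfolding restr_group_def by simp
qed

lemma orbit_Hp_eq_orbit_H:
  assumes "x \<in> {1..n}"
  shows "orbit (S\<lparr>carrier := Hp\<rparr>) (\<lambda>g. g) x = orbit (S\<lparr>carrier := H\<rparr>) (\<lambda>g. g) x"
proof -
  obtain i where i: "i \<in> {1..k}" "orbit (S\<lparr>carrier := H\<rparr>) (\<lambda>g. g) x = \<Omega> i" "x \<in> \<Omega> i"
    using block_cover[OF assms] .
  interpret B: dihedral_block p n "D i" "Gi i" "\<Omega> i" using block_dihedral[OF i(1)] .
  have "\<Omega> i \<subseteq> {g x | g. g \<in> Hp}"
  proof
    fix y assume "y \<in> \<Omega> i"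
    then obtain \<tau> where "\<tau> \<in> Gi i" "\<tau> x = y" by (rule B.P_transitive[OF i(3)])
    moreover obtain \<sigma> where "\<sigma> \<in> Hp" "\<tau> = R i \<sigma>"
      using restr_group_Hp[OF i(1), unfolded restr_group_def] \<open>\<tau> \<in> Gi i\<close> by (metis imageE)
    ultimately show "y \<in> {g x | g. g \<in> Hp}" using i(3) unfolding restr_perm_def by auto
  qed
  moreover have "{g x | g. g \<in> Hp} \<subseteq> \<Omega> i" using i(2) Hp_subset unfolding orbit_H by blast
  ultimately show ?thesis using i(2) unfolding orbit_def by auto
qed

lemma orbits_Hp: "orbits (S\<lparr>carrier := Hp\<rparr>) {1..n} (\<lambda>g. g) = \<Omega> ` {1..k}"
proof -
  have "orbits (S\<lparr>carrier := Hp\<rparr>) {1..n} (\<lambda>g. g) = orbits (S\<lparr>carrier := H\<rparr>) {1..n} (\<lambda>g. g)"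
    unfolding orbits_def by (rule Collect_cong) (use orbit_Hp_eq_orbit_H in auto)
  then show ?thesis using orbits_H by simp
qed

lemma restr_group_Hp_cyclic:
  assumes i: "i \<in> {1..k}"
  shows "card (restr_group (\<Omega> i) Hp) = p \<and> cyclic_group (S\<lparr>carrier := restr_group (\<Omega> i) Hp\<rparr>)"
proof -
  interpret B: dihedral_block p n "D i" "Gi i" "\<Omega> i" using block_dihedral[OF i] .
  interpret Gi: group "S\<lparr>carrier := Gi i\<rparr>" using S.subgroup_imp_group[OF B.P_subgroup] .
  have "cyclic_group (S\<lparr>carrier := Gi i\<rparr>)"
    using Gi.prime_order_imp_cyclic B.card_P p_prime by (simp add: order_def)
  then show ?thesis using restr_group_Hp[OF i] B.card_P by simp
qed

lemma restr_H2_eq_reflection: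
  assumes i: "i \<in> {1..k}"
  obtains r where "R i ` H2 = {id, r}" "r \<in> D i" "r \<notin> Gi i"
proof -
  let ?B = "R i ` H2"
  have "id \<in> ?B" using restr_H2_inter_Gi[OF i] by blast
  moreover have card_B: "card ?B = 2" using card_restr_Hp_H2[OF i] by simp
  then have "?B \<noteq> {id}" by auto
  ultimately obtain r where r: "r \<in> ?B" "r \<noteq> id" by blast
  have "{id, r} \<subseteq> ?B" using \<open>id \<in> ?B\<close> r(1) by blast
  moreover have "finite ?B" using card_B by (intro card_ge_0_finite) simp
  ultimately have "?B = {id, r}"
    using card_seteq[OF \<open>finite ?B\<close> \<open>{id, r} \<subseteq> ?B\<close>] card_B r(2) by simp
  moreover have "r \<in> D i" using r(1) H2_subset unfolding restr_group_def by blast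
  moreover have "r \<notin> Gi i" using r restr_H2_inter_Gi[OF i] by blast
  ultimately show ?thesis by (rule that)
qed

lemma restr_H2_stabilizer:
  assumes i: "i \<in> {1..k}"
  shows "\<exists>\<alpha> \<in> \<Omega> i. restr_group (\<Omega> i) H2 = stabilizer (S\<lparr>carrier := D i\<rparr>) (\<lambda>g. g) \<alpha>"
proof -
  interpret B: dihedral_block p n "D i" "Gi i" "\<Omega> i" using block_dihedral[OF i] .
  obtain r where r: "R i ` H2 = {id, r}" "r \<in> D i" "r \<notin> Gi i" using restr_H2_eq_reflection[OF i] .
  obtain \<alpha> where \<alpha>: "\<alpha> \<in> \<Omega> i" "r \<alpha> = \<alpha>" using B.not_in_P_fixpoint[OF r(2,3)] .
  have "restr_group (\<Omega> i) H2 = stabilizer (S\<lparr>carrier := D i\<rparr>) (\<lambda>g. g) \<alpha>"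
    using B.stabilizer_eq_reflection[OF r(2,3) \<alpha>] r(1) unfolding restr_group_def stabilizer_def by simp
  then show ?thesis using \<alpha>(1) by blast
qed

end

theorem lemma7p1:
  fixes p k n :: nat
    and H Hp H2 :: "(nat \<Rightarrow> nat) set"
    and \<Omega> :: "nat \<Rightarrow> nat set"
    and Gi :: "nat \<Rightarrow> (nat \<Rightarrow> nat) set"
  assumes p_prime: "prime p" and p_odd: "odd p"
    and n_def: "n = p * k"
    and H_sub: "subgroup H (sym_group n)"
    and orbs: "orbits ((sym_group n)\<lparr>carrier := H\<rparr>) {1..n} (\<lambda>g. g) = \<Omega> ` {1..k}"
    and \<Omega>_inj: "inj_on \<Omega> {1..k}"
    and \<Omega>_card: "\<forall>i \<in> {1..k}. card (\<Omega> i) = p"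
    and dihedral: "\<forall>i \<in> {1..k}.
        perm_isomorphic (restr_group (\<Omega> i) H) (\<Omega> i) (dihedral_perms p) {0..<p}"
    and Gi_sylow: "\<forall>i \<in> {1..k}.
        is_sylow ((sym_group n)\<lparr>carrier := restr_group (\<Omega> i) H\<rparr>) p (Gi i)"
    and Hp_sylow: "is_sylow ((sym_group n)\<lparr>carrier := H\<rparr>) p Hp"
    and H2_sylow: "is_sylow ((sym_group n)\<lparr>carrier := H\<rparr>) 2 H2"
  shows
    \<comment> \<open>(1) H = Hp \<rtimes> H2 = (H \<inter> G) \<rtimes> H2, and N(H) \<le> N(Hp)\<close>
    "(normal Hp ((sym_group n)\<lparr>carrier := H\<rparr>)
        \<and> Hp \<inter> H2 = {id}
        \<and> Hp <#>\<^bsub>sym_group n\<^esub> H2 = H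
        \<and> Hp = H \<inter> direct_prod_perms n k \<Omega> Gi
        \<and> normalizer (sym_group n) H \<subseteq> normalizer (sym_group n) Hp)
     \<comment> \<open>(2) Hp is a subdirect product of G; orbits of Hp are the Omega i, each
         restriction cyclic of order p\<close>
     \<and> (Hp \<subseteq> direct_prod_perms n k \<Omega> Gi
        \<and> (\<forall>i \<in> {1..k}. restr_group (\<Omega> i) Hp = Gi i)
        \<and> orbits ((sym_group n)\<lparr>carrier := Hp\<rparr>) {1..n} (\<lambda>g. g) = \<Omega> ` {1..k}
        \<and> (\<forall>i \<in> {1..k}. card (restr_group (\<Omega> i) Hp) = p
              \<and> cyclic_group ((sym_group n)\<lparr>carrier := restr_group (\<Omega> i) Hp\<rparr>)))
     \<comment> \<open>(3) H2 restricted to Omega i is a point stabiliser in D i\<close>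
     \<and> (\<forall>i \<in> {1..k}. \<exists>\<alpha> \<in> \<Omega> i.
          restr_group (\<Omega> i) H2
            = stabilizer ((sym_group n)\<lparr>carrier := restr_group (\<Omega> i) H\<rparr>) (\<lambda>g. g) \<alpha>)"
proof -
  interpret dihedral_block_group p k n H Hp H2 \<Omega> Gi
    by (rule dihedral_block_group.intro) fact+
  show ?thesis
    using Hp_normal Hp_inter_H2 Hp_mult_H2 Hp_eq_H_inter_G normalizer_H_subset
      restr_group_Hp orbits_Hp restr_group_Hp_cyclic restr_H2_stabilizer by blast
qed

end
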